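(* Let $R$ be a complete discrete valuation ring of equal characteristic with maximal ideal $\mathfrak{p}$ and finite residue field $k=R/\mathfrak{p}$ with $|k|>9$, and let $n\ge2$. Then every closed normal subgroup $H$ of $\mathrm{SL}_n(R)$ whose image in $\mathrm{SL}_n(k)$ is all of $\mathrm{SL}_n(k)$ is equal to $\mathrm{SL}_n(R)$.
   Context: The topology on $\mathrm{SL}_n(R)$ is the one induced by $R$. *)

theory Defs
  imports "HOL-Analysis.Analysis" "HOL-Algebra.Coset"
begin

text \<open>Its maximal ideal is
  \<pi>R (= the set of non-units).\<close>
definition dvr_uniformizer :: "'a::idom \<Rightarrow> bool" where
  "dvr_uniformizer \<pi> \<longleftrightarrow> \<pi> \<noteq> 0 \<and> \<not> \<pi> dvd 1 \<and>
     (\<forall>x. x \<noteq> 0 \<longrightarrow> (\<exists>u n. u dvd 1 \<and> x = u * \<pi> ^ n))"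

definition padic_complete :: "'a::idom \<Rightarrow> bool" where
  "padic_complete \<pi> \<longleftrightarrow>
     (\<forall>x :: nat \<Rightarrow> 'a.
        (\<forall>m. \<exists>N. \<forall>i\<ge>N. \<forall>j\<ge>N. \<pi> ^ m dvd (x i - x j)) \<longrightarrow>
        (\<exists>L. \<forall>m. \<exists>N. \<forall>i\<ge>N. \<pi> ^ m dvd (x i - L)))"

definition residue_field :: "'a::idom \<Rightarrow> 'a set set" where
  "residue_field \<pi> = (\<lambda>x. {y. \<pi> dvd (y - x)}) ` UNIV"

text \<open>Equal characteristic: char R = char k, i.e. the kernels of Z \<rightarrow> R and Z \<rightarrow> k coincide.\<close>
definition equal_char :: "'a::idom \<Rightarrow> bool" where
  "equal_char \<pi> \<longleftrightarrow> (\<forall>m::nat. \<pi> dvd (of_nat m :: 'a) \<longleftrightarrow> (of_nat m :: 'a) = 0)"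

text \<open>The group SL_n(R), n = CARD('n).\<close>
definition SL :: "('a::comm_ring_1 ^ 'n ^ 'n) monoid" where
  "SL = \<lparr>carrier = {A. det A = 1}, mult = (**), one = mat 1\<rparr>"

text \<open>Closedness in SL_n(R) for the topology induced by the \<pi>-adic topology of R
  (entrywise congruence modulo \<pi>^m gives a basis of neighbourhoods).\<close>
definition SL_closed :: "'a::comm_ring_1 \<Rightarrow> ('a ^ 'n ^ 'n) set \<Rightarrow> bool" where
  "SL_closed \<pi> H \<longleftrightarrow>
     (\<forall>A. det A = 1 \<longrightarrow>
        (\<forall>m. \<exists>h\<in>H. \<forall>i j. \<pi> ^ m dvd (A $ i $ j - h $ i $ j)) \<longrightarrow> A \<in> H)"

text \<open>The image of H under reduction SL_n(R) \<rightarrow> SL_n(k) is all of SL_n(k): every matrix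
  over k of determinant 1 (i.e. the reduction of some C over R with det C \<equiv> 1 mod \<pi>)
  is the reduction of an element of H.\<close>
definition surj_mod :: "'a::comm_ring_1 \<Rightarrow> ('a ^ 'n ^ 'n) set \<Rightarrow> bool" where
  "surj_mod \<pi> H \<longleftrightarrow>
     (\<forall>C. \<pi> dvd (det C - 1) \<longrightarrow> (\<exists>h\<in>H. \<forall>i j. \<pi> dvd (C $ i $ j - h $ i $ j)))"

end

theory Submission
  imports Defs
begin

(*
  Since H is closed, it suffices to show
  that every A in SL_n(R) is congruent to an element of H modulo p^m for every m.  This is
  done by successive approximation: if A is congruent to h in H modulo p^m (m >= 1), then
  h^-1 A = 1 + p^m Y with trace Y = 0 mod p (because its determinant is 1), and it remains
  to find h' in H with h' = 1 + p^m Y modulo p^(m+1).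

  For this we study the "layer" of H at level m: the set of Y such that 1 + p^m Y lies in H
  modulo p^(m+1).  It is additive, and it contains C E C^-1 - E whenever E^2 = 0 and C is
  the reduction of an element of H (take a commutator in the normal subgroup H).  Choosing
  for C diagonal matrices diag(a, a^-1) with a^2 - 1 a unit (which exists as the residue
  field has more than 3 elements) and unipotent matrices yields all matrices c E_ij (i ~= j)
  and c (E_jj - E_ii), hence every matrix of trace 0 mod p.

  The argument only needs a residue
  field with more than 3 elements.
*)

definition mscale :: "'a::comm_ring_1 \<Rightarrow> 'a^'n^'n \<Rightarrow> 'a^'n^'n" where
  "mscale c A = (\<chi> i j. c * A$i$j)"

definition matrix_unit :: "'n \<Rightarrow> 'n \<Rightarrow> 'a::comm_ring_1^'n^'n" where
  "matrix_unit k l = (\<chi> r s. if r = k \<and> s = l then 1 else 0)"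

definition diag_matrix :: "('n \<Rightarrow> 'a::comm_ring_1) \<Rightarrow> 'a^'n^'n" where
  "diag_matrix d = (\<chi> i j. if i = j then d i else 0)"

lemma matrix_mult_entry: "(A ** B)$i$j = (\<Sum>k\<in>UNIV. A$i$k * B$k$j)"
  by (simp add: matrix_matrix_mult_def)

lemma mscale_entry [simp]: "mscale c A $i$j = c * A$i$j"
  by (simp add: mscale_def)

lemma matrix_unit_entry [simp]: "matrix_unit k l $r$s = (if r = k \<and> s = l then 1 else 0)"
  by (simp add: matrix_unit_def)

lemma diag_matrix_entry [simp]: "diag_matrix d $i$j = (if i = j then d i else 0)"
  by (simp add: diag_matrix_def)

lemma mat_entry [simp]: "mat c $i$j = (if i = j then c else 0)"
  by (simp add: mat_def)

lemma diag_matrix_mult [simp]: "(diag_matrix d ** A)$i$j = d i * A$i$j"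
proof -
  have "(diag_matrix d ** A)$i$j = (\<Sum>k\<in>UNIV. if k = i then d i * A$i$j else 0)"
    unfolding matrix_mult_entry by (rule sum.cong) auto
  then show ?thesis by simp
qed

lemma mult_diag_matrix [simp]: "(A ** diag_matrix d)$i$j = A$i$j * d j"
proof -
  have "(A ** diag_matrix d)$i$j = (\<Sum>k\<in>UNIV. if k = j then A$i$j * d j else 0)"
    unfolding matrix_mult_entry by (rule sum.cong) auto
  then show ?thesis by simp
qed

lemma matrix_unit_mult [simp]:
  "((matrix_unit k l :: 'a::comm_ring_1^'n^'n) ** A)$i$j = (if i = k then A$l$j else 0)"
proof -
  have "((matrix_unit k l :: 'a^'n^'n) ** A)$i$j
      = (\<Sum>r\<in>UNIV. if r = l then (if i = k then A$l$j else 0) else 0)"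
    unfolding matrix_mult_entry by (rule sum.cong) auto
  then show ?thesis by simp
qed

lemma mult_matrix_unit [simp]:
  "(A ** (matrix_unit k l :: 'a::comm_ring_1^'n^'n))$i$j = (if j = l then A$i$k else 0)"
proof -
  have "(A ** (matrix_unit k l :: 'a^'n^'n))$i$j
      = (\<Sum>r\<in>UNIV. if r = k then (if j = l then A$i$k else 0) else 0)"
    unfolding matrix_mult_entry by (rule sum.cong) auto
  then show ?thesis by simp
qed

lemma matrix_unit_square: "i \<noteq> j \<Longrightarrow> (matrix_unit i j :: 'a::comm_ring_1^'n^'n) ** matrix_unit i j = 0"
  by (simp add: vec_eq_iff)

lemma mscale_mult [simp]: "mscale c A ** B = mscale c (A ** B)"
  by (simp add: vec_eq_iff matrix_mult_entry sum_distrib_left mult.assoc)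

lemma mult_mscale [simp]: "A ** mscale c B = mscale c (A ** B)"
  by (simp add: vec_eq_iff matrix_mult_entry sum_distrib_left mult_ac)

lemma mscale_zero [simp]: "mscale c 0 = 0"
  by (simp add: vec_eq_iff)

lemma mscale_mscale [simp]: "mscale c (mscale d A) = mscale (c * d) A"
  by (simp add: vec_eq_iff mult.assoc)

lemma mscale_add: "mscale c (A + B) = mscale c A + mscale c B"
  by (simp add: vec_eq_iff algebra_simps)

lemma mscale_diff: "mscale c (A - B) = mscale c A - mscale c B"
  by (simp add: vec_eq_iff algebra_simps)

lemma matrix_add_rdistrib: "(A + B) ** C = A ** C + B ** (C::'a::comm_ring_1^'n^'n)"
  by (simp add: vec_eq_iff matrix_mult_entry algebra_simps sum.distrib)

lemma matrix_diff_ldistrib: "A ** (B - C) = A ** B - A ** (C::'a::comm_ring_1^'n^'n)"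
  by (simp add: vec_eq_iff matrix_mult_entry algebra_simps sum_subtractf)

lemma matrix_diff_rdistrib: "(A - B) ** C = A ** C - B ** (C::'a::comm_ring_1^'n^'n)"
  by (simp add: vec_eq_iff matrix_mult_entry algebra_simps sum_subtractf)

text \<open>A transvection 1 + t E_ij (i \<noteq> j) has determinant 1: it is a row operation on 1.\<close>
lemma det_transvection:
  assumes "i \<noteq> j"
  shows "det (mat 1 + mscale t (matrix_unit i j) :: 'a::comm_ring_1^'n^'n) = 1"
proof -
  have "(mat 1 + mscale t (matrix_unit i j) :: 'a^'n^'n)
      = (\<chi> k. if k = i then row i (mat 1) + t *s row j (mat 1) else row k (mat 1))"
    using assms by (auto simp: vec_eq_iff row_def)
  then show ?thesis using det_row_operation[OF assms, of "mat 1" t] by simp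
qed

section \<open>Entrywise congruence of matrices\<close>

text \<open>A and B are congruent modulo q when all their entries are.  Modulo p^m this is the
  neighbourhood basis of the p-adic topology on matrices.\<close>
definition cong_mat :: "'a::comm_ring_1 \<Rightarrow> 'a^'n^'n \<Rightarrow> 'a^'n^'n \<Rightarrow> bool" where
  "cong_mat q A B \<longleftrightarrow> (\<forall>i j. q dvd (A$i$j - B$i$j))"

lemma cong_mat_refl [simp]: "cong_mat q A A"
  by (simp add: cong_mat_def)

lemma cong_mat_sym: "cong_mat q A B \<Longrightarrow> cong_mat q B A"
  unfolding cong_mat_def by (metis dvd_minus_iff minus_diff_eq)

lemma cong_mat_trans: "cong_mat q A B \<Longrightarrow> cong_mat q B C \<Longrightarrow> cong_mat q A C"
proof -
  have "A$i$j - C$i$j = (A$i$j - B$i$j) + (B$i$j - C$i$j)" for i j by simp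
  then show "cong_mat q A B \<Longrightarrow> cong_mat q B C \<Longrightarrow> cong_mat q A C"
    unfolding cong_mat_def by (metis dvd_add)
qed

lemma cong_mat_add: "cong_mat q A A' \<Longrightarrow> cong_mat q B B' \<Longrightarrow> cong_mat q (A + B) (A' + B')"
  unfolding cong_mat_def by (simp add: add_diff_add)

lemma cong_mat_diff: "cong_mat q A A' \<Longrightarrow> cong_mat q B B' \<Longrightarrow> cong_mat q (A - B) (A' - B')"
proof -
  have "(A - B)$i$j - (A' - B')$i$j = (A$i$j - A'$i$j) - (B$i$j - B'$i$j)" for i j by simp
  then show "cong_mat q A A' \<Longrightarrow> cong_mat q B B' \<Longrightarrow> cong_mat q (A - B) (A' - B')"
    unfolding cong_mat_def by (metis dvd_diff)
qed

lemma cong_mat_mscale: "cong_mat q A B \<Longrightarrow> cong_mat (c * q) (mscale c A) (mscale c B)"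
  unfolding cong_mat_def by (simp add: right_diff_distrib[symmetric] mult_dvd_mono)

lemma cong_mat_mscale_zero: "q dvd c \<Longrightarrow> cong_mat q (mscale c A) 0"
  unfolding cong_mat_def by simp

lemma cong_mat_mult_left: "cong_mat q A B \<Longrightarrow> cong_mat q (C ** A) (C ** B)"
  unfolding cong_mat_def matrix_mult_entry
  by (simp add: sum_subtractf[symmetric] right_diff_distrib[symmetric] dvd_sum)

lemma cong_mat_mult_right: "cong_mat q A B \<Longrightarrow> cong_mat q (A ** C) (B ** C)"
  unfolding cong_mat_def matrix_mult_entry
  by (simp add: sum_subtractf[symmetric] left_diff_distrib[symmetric] dvd_sum)

lemma cong_mat_mult: "cong_mat q A A' \<Longrightarrow> cong_mat q B B' \<Longrightarrow> cong_mat q (A ** B) (A' ** B')"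
  by (meson cong_mat_mult_left cong_mat_mult_right cong_mat_trans)

lemma cong_mat_inverse:
  assumes "cong_mat q g C" "gi ** g = mat 1" "C ** Ci = mat 1"
  shows "cong_mat q gi Ci"
proof -
  have "gi = (gi ** C) ** Ci" using assms(3) by (simp flip: matrix_mul_assoc)
  moreover have "cong_mat q ((gi ** C) ** Ci) ((gi ** g) ** Ci)"
    using cong_mat_sym[OF assms(1)] by (intro cong_mat_mult_right cong_mat_mult_left)
  ultimately show ?thesis using assms(2) by simp
qed

lemma cong_mat_decompose:
  assumes "cong_mat q B C"
  obtains Y where "B = C + mscale q Y"
proof -
  have "\<forall>i j. \<exists>y. B$i$j = C$i$j + q * y"
    using assms unfolding cong_mat_def by (metis dvd_def diff_add_cancel add.commute)
  then obtain f where f: "\<And>i j. B$i$j = C$i$j + q * f i j" by metis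
  have "B = C + mscale q (\<chi> i j. f i j)" by (simp add: vec_eq_iff f)
  then show thesis by (rule that)
qed

section \<open>First-order expansion of the determinant\<close>

lemma prod_first_order:
  fixes s :: "'a::comm_ring_1"
  shows "finite S \<Longrightarrow> s * s dvd ((\<Prod>i\<in>S. 1 + s * f i) - (1 + s * (\<Sum>i\<in>S. f i)))"
proof (induction S rule: finite_induct)
  case empty then show ?case by simp
next
  case (insert x F)
  then obtain k where k: "(\<Prod>i\<in>F. 1 + s * f i) - (1 + s * (\<Sum>i\<in>F. f i)) = s * s * k"
    by auto
  define P where "P = (\<Prod>i\<in>F. 1 + s * f i)"
  define T where "T = (\<Sum>i\<in>F. f i)"
  have P: "P = 1 + s * T + s * s * k" using k unfolding P_def T_def by (simp add: algebra_simps)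
  have "(1 + s * f x) * P - (1 + s * (f x + T)) = s * s * (f x * T + k + s * f x * k)"
    unfolding P by (simp add: algebra_simps)
  then show ?case using insert unfolding P_def T_def by (simp add: dvd_def) blast
qed

lemma prod_dvd_two_factors:
  fixes f :: "'b \<Rightarrow> 'a::comm_ring_1"
  assumes "finite S" "i \<in> S" "k \<in> S" "i \<noteq> k" "s dvd f i" "s dvd f k"
  shows "s * s dvd prod f S"
proof -
  have "prod f S = f i * prod f (S - {i})" using assms by (simp add: prod.remove)
  also have "prod f (S - {i}) = f k * prod f (S - {i} - {k})" using assms by (intro prod.remove) auto
  finally have "prod f S = (f i * f k) * prod f (S - {i} - {k})" by (simp add: mult.assoc)
  then show ?thesis using assms by (simp add: mult_dvd_mono)
qed

text \<open>det (1 + s Y) = 1 + s trace Y modulo s^2: in the Leibniz expansion the identity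
  permutation contributes the product of the diagonal, and every other permutation moves
  two indices, so its term picks up two off-diagonal factors divisible by s.\<close>
lemma det_first_order:
  fixes Y :: "'a::comm_ring_1^'n^'n"
  shows "s * s dvd (det (mat 1 + mscale s Y) - (1 + s * trace Y))"
proof -
  define P where "P = {p. p permutes (UNIV::'n set)}"
  define t where "t p = of_int (sign p) * (\<Prod>i\<in>UNIV. (mat 1 + mscale s Y)$i$p i)" for p
  have "finite P" "id \<in> P" unfolding P_def by (simp_all add: finite_permutations)
  then have det: "det (mat 1 + mscale s Y) = t id + sum t (P - {id})"
    unfolding det_def P_def[symmetric] t_def[symmetric] by (simp add: sum.remove)
  have diagonal: "t id = (\<Prod>i\<in>UNIV. 1 + s * Y$i$i)" unfolding t_def by simp
  have off_diagonal: "s * s dvd t p" if p: "p \<in> P - {id}" for p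
  proof -
    obtain i where i: "p i \<noteq> i" using p by (auto simp: fun_eq_iff)
    have "inj p" using p unfolding P_def by (auto intro: permutes_inj)
    then have "p (p i) \<noteq> p i" using i by (metis injD)
    then have "s * s dvd (\<Prod>i\<in>UNIV. (mat 1 + mscale s Y)$i$p i)"
      using i by (intro prod_dvd_two_factors[of UNIV i "p i"]) auto
    then show ?thesis unfolding t_def by simp
  qed
  have "s * s dvd sum t (P - {id})" using off_diagonal by (intro dvd_sum) blast
  moreover have "s * s dvd t id - (1 + s * trace Y)"
    unfolding diagonal trace_def by (rule prod_first_order) simp
  ultimately have "s * s dvd (t id - (1 + s * trace Y)) + sum t (P - {id})" by simp
  then show ?thesis unfolding det by (simp add: algebra_simps)
qed

lemma trace_dvd_of_det_one:
  fixes Y :: "'a::idom^'n^'n"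
  assumes "p \<noteq> 0" "m \<ge> 1" "det (mat 1 + mscale (p^m) Y) = 1"
  shows "p dvd trace Y"
proof -
  have "p^m * p^m dvd p^m * trace Y"
    using det_first_order[of "p^m" Y] assms(3) by simp
  moreover have "p^m * p dvd p^m * p^m" using assms(2)
    by (intro mult_dvd_mono) (auto intro: dvd_power)
  ultimately have "p^m * p dvd p^m * trace Y" using dvd_trans by blast
  then show ?thesis using assms(1) by simp
qed

section \<open>Discrete valuation rings\<close>

lemma dvr_unit:
  assumes "dvr_uniformizer (p::'a::idom)" "\<not> p dvd x"
  shows "x dvd 1"
proof -
  have "x \<noteq> 0" using assms(2) by auto
  then obtain u n where u: "u dvd 1" and x: "x = u * p^n"
    using assms(1) unfolding dvr_uniformizer_def by blast
  have "n = 0"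
  proof (rule ccontr)
    assume "n \<noteq> 0"
    then have "p dvd x" unfolding x by simp
    then show False using assms(2) by simp
  qed
  then show ?thesis using u x by simp
qed

lemma dvr_prime:
  assumes "dvr_uniformizer (p::'a::idom)" "p dvd x * y"
  shows "p dvd x \<or> p dvd y"
proof (rule ccontr)
  assume "\<not> (p dvd x \<or> p dvd y)"
  then have "x dvd 1" "y dvd 1" using dvr_unit[OF assms(1)] by blast+
  then have "x * y dvd 1" using mult_dvd_mono[of x 1 y 1] by simp
  then have "p dvd 1" using assms(2) dvd_trans by blast
  then show False using assms(1) unfolding dvr_uniformizer_def by simp
qed

text \<open>If the residue field has more than 3 elements, some unit a has a^2 - 1 a unit:
  otherwise every residue would be a root of x (x - 1) (x + 1).\<close>
lemma exists_unit_square_minus_one_unit: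
  assumes U: "dvr_uniformizer (p::'a::idom)"
    and F: "finite (residue_field p)" and C: "card (residue_field p) > 3"
  obtains a :: "'a::idom" where "a dvd 1" "(a * a - 1) dvd 1"
proof -
  define cls where "cls x = {y. p dvd (y - x)}" for x
  have cls_eq: "cls x = cls c" if "p dvd (x - c)" for x c
  proof -
    have "y - c = (y - x) + (x - c)" for y by simp
    then show ?thesis unfolding cls_def using that by (metis dvd_add_left_iff)
  qed
  have "\<exists>a. \<not> p dvd a \<and> \<not> p dvd (a * a - 1)"
  proof (rule ccontr)
    assume none: "\<not> ?thesis"
    have root: "p dvd x \<or> p dvd (x - 1) \<or> p dvd (x + 1)" for x
    proof -
      have "x * x - 1 = (x - 1) * (x + 1)" by (simp add: algebra_simps)
      moreover have "p dvd x \<or> p dvd (x * x - 1)" using none by blast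
      ultimately show ?thesis using dvr_prime[OF U, of "x - 1" "x + 1"] by auto
    qed
    have "residue_field p \<subseteq> {cls 0, cls 1, cls (-1)}"
    proof
      fix X assume "X \<in> residue_field p"
      then obtain x where "X = cls x" unfolding residue_field_def cls_def by auto
      then show "X \<in> {cls 0, cls 1, cls (-1)}"
        using root[of x] cls_eq[of x 0] cls_eq[of x 1] cls_eq[of x "-1"] by auto
    qed
    then have "card (residue_field p) \<le> card {cls 0, cls 1, cls (-1)}" by (intro card_mono) auto
    also have "\<dots> \<le> 3" by (simp add: card_insert_if)
    finally show False using C by simp
  qed
  then obtain a where a: "\<not> p dvd a" "\<not> p dvd (a * a - 1)" by blast
  show thesis
  proof (rule that)
    show "a dvd 1" "(a * a - 1) dvd 1" using a by (simp_all add: dvr_unit[OF U])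
  qed
qed

section \<open>Layers of a normal subgroup of SL_n\<close>

lemma SL_carrier [simp]: "carrier SL = {A. det A = 1}"
  and SL_mult [simp]: "mult SL = (**)"
  and SL_one [simp]: "one SL = mat 1"
  by (simp_all add: SL_def)

text \<open>It is the image of H \<inter> \<Gamma>(p^m) in
  \<Gamma>(p^m)/\<Gamma>(p^(m+1)), identified with matrices over the residue field.\<close>
definition layer :: "'a::comm_ring_1 \<Rightarrow> ('a^'n^'n) set \<Rightarrow> nat \<Rightarrow> 'a^'n^'n \<Rightarrow> bool" where
  "layer p H m Y \<longleftrightarrow> (\<exists>h\<in>H. cong_mat (p^(m+1)) h (mat 1 + mscale (p^m) Y))"

lemma layer_cong:
  assumes "layer p H m Y" "cong_mat p Y Y'"
  shows "layer p H m Y'"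
proof -
  obtain h where h: "h \<in> H" "cong_mat (p^(m+1)) h (mat 1 + mscale (p^m) Y)"
    using assms(1) unfolding layer_def by blast
  have "cong_mat (p^m * p) (mat 1 + mscale (p^m) Y) (mat 1 + mscale (p^m) Y')"
    using assms(2) by (intro cong_mat_add cong_mat_mscale) simp_all
  then have "cong_mat (p^(m+1)) h (mat 1 + mscale (p^m) Y')"
    using h(2) cong_mat_trans by (metis power_Suc2 Suc_eq_plus1)
  then show ?thesis using h(1) unfolding layer_def by blast
qed

context
  fixes H :: "('a::comm_ring_1^'n^'n) set"
  assumes normal: "normal H SL"
begin

lemma SL_group: "group (SL :: ('a^'n^'n) monoid)"
  using normal by (rule normal.axioms(2))

lemma H_subgroup: "subgroup H SL"
  using normal by (rule normal_imp_subgroup)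

lemma H_det: "h \<in> H \<Longrightarrow> det h = 1"
  using subgroup.subset[OF H_subgroup] by auto

lemma H_inverse:
  assumes "h \<in> H"
  shows "inv\<^bsub>SL\<^esub> h \<in> H" "h ** inv\<^bsub>SL\<^esub> h = mat 1" "inv\<^bsub>SL\<^esub> h ** h = mat 1"
proof -
  interpret group "SL :: ('a^'n^'n) monoid" by (rule SL_group)
  have "h \<in> carrier SL" using assms H_det by simp
  then show "h ** inv\<^bsub>SL\<^esub> h = mat 1" "inv\<^bsub>SL\<^esub> h ** h = mat 1"
    using r_inv l_inv by simp_all
  show "inv\<^bsub>SL\<^esub> h \<in> H" by (rule subgroup.m_inv_closed[OF H_subgroup assms])
qed

lemma commutator_mem:
  assumes g: "g \<in> H" and x: "det x = 1" "x ** xi = mat 1" "xi ** x = mat 1"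
  shows "g ** x ** inv\<^bsub>SL\<^esub> g ** xi \<in> H"
proof -
  interpret G: group "SL :: ('a^'n^'n) monoid" by (rule SL_group)
  interpret subgroup H "SL :: ('a^'n^'n) monoid" by (rule H_subgroup)
  have xc: "x \<in> carrier SL" using x by simp
  have "det x * det xi = 1" using x(2) by (simp flip: det_mul)
  then have "xi \<in> carrier SL" using x(1) by simp
  then have xi: "inv\<^bsub>SL\<^esub> x = xi" using G.inv_equality[of xi x] x(3) xc by simp
  have "x \<otimes>\<^bsub>SL\<^esub> inv\<^bsub>SL\<^esub> g \<otimes>\<^bsub>SL\<^esub> inv\<^bsub>SL\<^esub> x \<in> H"
    using normal xc H_inverse(1)[OF g] by (simp add: G.normal_inv_iff)
  then have "g \<otimes>\<^bsub>SL\<^esub> (x \<otimes>\<^bsub>SL\<^esub> inv\<^bsub>SL\<^esub> g \<otimes>\<^bsub>SL\<^esub> inv\<^bsub>SL\<^esub> x) \<in> H"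
    using g by (rule m_closed[rotated])
  then show ?thesis using xi by (simp add: matrix_mul_assoc)
qed

lemma layer_zero: "layer p H m 0"
proof -
  have "mat 1 \<in> H" using subgroup.one_closed[OF H_subgroup] by simp
  then show ?thesis unfolding layer_def by force
qed

text \<open>Layers of positive level are additive, since
  (1 + p^m Y1)(1 + p^m Y2) = 1 + p^m (Y1 + Y2) modulo p^(2m).\<close>
lemma layer_add:
  assumes m: "m \<ge> 1" and Y: "layer p H m Y1" "layer p H m Y2"
  shows "layer p H m (Y1 + Y2)"
proof -
  obtain h1 where h1: "h1 \<in> H" "cong_mat (p^(m+1)) h1 (mat 1 + mscale (p^m) Y1)"
    using Y(1) unfolding layer_def by blast
  obtain h2 where h2: "h2 \<in> H" "cong_mat (p^(m+1)) h2 (mat 1 + mscale (p^m) Y2)"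
    using Y(2) unfolding layer_def by blast
  have "h1 ** h2 \<in> H" using subgroup.m_closed[OF H_subgroup h1(1) h2(1)] by simp
  have prod: "(mat 1 + mscale (p^m) Y1) ** (mat 1 + mscale (p^m) Y2)
      = mat 1 + mscale (p^m) (Y1 + Y2) + mscale (p^m * p^m) (Y1 ** Y2)"
    by (simp add: matrix_add_ldistrib matrix_add_rdistrib mscale_add algebra_simps)
  have "p^(m+1) dvd p^(m+m)" using m by (intro le_imp_power_dvd) simp
  then have "cong_mat (p^(m+1)) (mscale (p^m * p^m) (Y1 ** Y2)) 0"
    by (intro cong_mat_mscale_zero) (simp add: power_add)
  then have "cong_mat (p^(m+1)) (h1 ** h2) (mat 1 + mscale (p^m) (Y1 + Y2) + 0)"
    using cong_mat_mult[OF h1(2) h2(2)] cong_mat_add[OF cong_mat_refl] cong_mat_trans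
    unfolding prod by blast
  with \<open>h1 ** h2 \<in> H\<close> show ?thesis unfolding layer_def by auto
qed

lemma layer_sum:
  assumes "m \<ge> 1" "finite F" "\<And>x. x \<in> F \<Longrightarrow> layer p H m (f x)"
  shows "layer p H m (sum f F)"
  using assms(2,3) by (induction F rule: finite_induct) (auto intro: layer_zero layer_add[OF assms(1)])

text \<open>The key source of layer elements: if g \<in> H reduces to C modulo p and E^2 = 0,
  the commutator of g with 1 + p^m E equals 1 + p^m (C E C^-1 - E) modulo p^(m+1).\<close>
lemma layer_conjugation:
  assumes m: "m \<ge> 1" and g: "g \<in> H" "cong_mat p g C" and C: "C ** Ci = mat 1"
    and E: "E ** E = 0" "det (mat 1 + mscale (p^m) E) = 1"
  shows "layer p H m (C ** E ** Ci - E)"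
proof -
  define gi where "gi = inv\<^bsub>SL\<^esub> g"
  have g_gi: "g ** gi = mat 1" and gi_g: "gi ** g = mat 1"
    using H_inverse[OF g(1)] unfolding gi_def by simp_all
  have x1: "(mat 1 + mscale (p^m) E) ** (mat 1 - mscale (p^m) E) = mat 1"
    and x2: "(mat 1 - mscale (p^m) E) ** (mat 1 + mscale (p^m) E) = mat 1"
    by (simp_all add: matrix_add_ldistrib matrix_diff_ldistrib matrix_add_rdistrib
        matrix_diff_rdistrib E(1))
  have in_H: "g ** (mat 1 + mscale (p^m) E) ** gi ** (mat 1 - mscale (p^m) E) \<in> H"
    unfolding gi_def by (rule commutator_mem[OF g(1) E(2) x1 x2])
  have "g ** (mat 1 + mscale (p^m) E) ** gi = mat 1 + mscale (p^m) (g ** E ** gi)"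
    using g_gi by (simp add: matrix_add_ldistrib matrix_add_rdistrib)
  then have expand: "g ** (mat 1 + mscale (p^m) E) ** gi ** (mat 1 - mscale (p^m) E)
      = mat 1 + mscale (p^m) (g ** E ** gi - E) - mscale (p^m * p^m) (g ** E ** gi ** E)"
    by (simp add: matrix_diff_ldistrib matrix_add_rdistrib mscale_add mscale_diff
        matrix_mul_assoc algebra_simps)
  have "cong_mat p gi Ci" using g(2) gi_g C by (rule cong_mat_inverse)
  then have "cong_mat p (g ** E ** gi - E) (C ** E ** Ci - E)"
    using g(2) by (intro cong_mat_diff cong_mat_mult) simp_all
  then have first: "cong_mat (p^(m+1)) (mscale (p^m) (g ** E ** gi - E))
      (mscale (p^m) (C ** E ** Ci - E))"
    using cong_mat_mscale by (metis power_Suc2 Suc_eq_plus1)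
  have "p^(m+1) dvd p^(m+m)" using m by (intro le_imp_power_dvd) simp
  then have second: "cong_mat (p^(m+1)) (mscale (p^m * p^m) (g ** E ** gi ** E)) 0"
    by (intro cong_mat_mscale_zero) (simp add: power_add)
  have "cong_mat (p^(m+1)) (g ** (mat 1 + mscale (p^m) E) ** gi ** (mat 1 - mscale (p^m) E))
      (mat 1 + mscale (p^m) (C ** E ** Ci - E) - 0)"
    unfolding expand by (intro cong_mat_diff cong_mat_add first second cong_mat_refl)
  with in_H show ?thesis unfolding layer_def by auto
qed

lemma lift_from_surj_mod:
  assumes "surj_mod p H" "det C = 1"
  obtains g where "g \<in> H" "cong_mat p g C"
proof -
  have "p dvd det C - 1" using assms(2) by simp
  then obtain g where "g \<in> H" "cong_mat p C g"
    using assms(1) unfolding surj_mod_def cong_mat_def by blast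
  then show thesis using that cong_mat_sym by blast
qed

text \<open>With a unit a such that a^2 - 1 is a unit, conjugating c' E_ij by diag(a, a^-1)
  (placed at i, j) gives (a^2 - 1) c' E_ij; so every multiple c E_ij lies in the layer.\<close>
lemma layer_matrix_unit:
  fixes a :: 'a
  assumes m: "m \<ge> 1" and surj: "surj_mod p H" and ij: "i \<noteq> j"
    and a: "a dvd 1" "(a * a - 1) dvd 1"
  shows "layer p H m (mscale c (matrix_unit i j))"
proof -
  obtain b where ab: "a * b = 1" using a(1) by (metis dvdE)
  obtain w where w: "(a * a - 1) * w = 1" using a(2) by (metis dvdE)
  define d where "d k = (if k = i then a else if k = j then b else 1)" for k
  define di where "di k = (if k = i then b else if k = j then a else 1)" for k
  have "(\<Prod>k\<in>UNIV. d k) = (\<Prod>k\<in>UNIV. (if k = i then a else 1) * (if k = j then b else 1))"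
    using ij unfolding d_def by (intro prod.cong) auto
  then have "det (diag_matrix d :: 'a^'n^'n) = 1"
    unfolding diag_matrix_def using ab by (subst det_diagonal) (auto simp: prod.distrib)
  then obtain g where g: "g \<in> H" "cong_mat p g (diag_matrix d)"
    using lift_from_surj_mod[OF surj] by blast
  have inverse: "diag_matrix d ** diag_matrix di = (mat 1 :: 'a^'n^'n)"
    unfolding d_def di_def using ab by (auto simp: vec_eq_iff mult.commute)
  define E :: "'a^'n^'n" where "E = mscale (c * w) (matrix_unit i j)"
  have E: "E ** E = 0" "det (mat 1 + mscale (p^m) E) = 1"
    unfolding E_def by (simp_all add: matrix_unit_square[OF ij] det_transvection[OF ij])
  have "c * w * (a * a - 1) = c" using w by (metis mult.assoc mult.commute mult_1_right)
  then have "diag_matrix d ** E ** diag_matrix di - E = mscale c (matrix_unit i j)"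
    unfolding d_def di_def E_def using ij ab by (auto simp: vec_eq_iff algebra_simps)
  then show ?thesis using layer_conjugation[OF m g inverse E] by simp
qed

text \<open>Conjugating c E_ij by the transvection 1 + E_ji gives c (E_jj - E_ii - E_ji) + c E_ij,
  so the diagonal differences c (E_jj - E_ii) lie in the layer as well.\<close>
lemma layer_diagonal_difference:
  assumes m: "m \<ge> 1" and surj: "surj_mod p H" and ij: "i \<noteq> j"
    and units: "\<And>c k l. k \<noteq> l \<Longrightarrow> layer p H m (mscale c (matrix_unit k l))"
  shows "layer p H m (mscale c (matrix_unit j j - matrix_unit i i))"
proof -
  define C :: "'a^'n^'n" where "C = mat 1 + mscale 1 (matrix_unit j i)"
  define Ci :: "'a^'n^'n" where "Ci = mat 1 + mscale (-1) (matrix_unit j i)"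
  have ji: "j \<noteq> i" using ij by simp
  obtain g where g: "g \<in> H" "cong_mat p g C"
    using lift_from_surj_mod[OF surj det_transvection[OF ji]] unfolding C_def by blast
  have inverse: "C ** Ci = mat 1" unfolding C_def Ci_def
    by (simp add: matrix_add_ldistrib matrix_add_rdistrib matrix_unit_square[OF ji] vec_eq_iff)
  define E :: "'a^'n^'n" where "E = mscale c (matrix_unit i j)"
  have E: "E ** E = 0" "det (mat 1 + mscale (p^m) E) = 1"
    unfolding E_def by (simp_all add: matrix_unit_square[OF ij] det_transvection[OF ij])
  have "C ** E ** Ci - E = mscale c (matrix_unit j j - matrix_unit i i - matrix_unit j i)"
    unfolding C_def Ci_def E_def using ij
    by (auto simp: vec_eq_iff algebra_simps matrix_add_ldistrib matrix_add_rdistrib)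
  then have "layer p H m (mscale c (matrix_unit j j - matrix_unit i i - matrix_unit j i)
      + mscale c (matrix_unit j i))"
    using layer_add[OF m layer_conjugation[OF m g inverse E] units[OF ji]] by simp
  moreover have "mscale c (matrix_unit j j - matrix_unit i i - matrix_unit j i)
      + mscale c (matrix_unit j i) = mscale c (matrix_unit j j - matrix_unit i i)"
    by (simp add: vec_eq_iff algebra_simps)
  ultimately show ?thesis by simp
qed

text \<open>Consequently the layer contains every Y with trace Y = 0 mod p: write Y as a sum of
  off-diagonal multiples c E_rs, diagonal differences Y_rr (E_rr - E_00), and
  trace Y \<cdot> E_00, which vanishes modulo p.\<close>
lemma layer_traceless:
  assumes m: "m \<ge> 1" and surj: "surj_mod p H"
    and units: "\<And>c k l. k \<noteq> l \<Longrightarrow> layer p H m (mscale c (matrix_unit k l))"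
    and tr: "p dvd trace Y"
  shows "layer p H m Y"
proof -
  fix i0 :: 'n
  define Off where "Off r s = (if r = s then 0 else mscale (Y$r$s) (matrix_unit r s))" for r s
  define Diag where "Diag r = mscale (Y$r$r) (matrix_unit r r - matrix_unit i0 i0)" for r
  have off: "layer p H m (\<Sum>r\<in>UNIV. \<Sum>s\<in>UNIV. Off r s)"
    by (intro layer_sum[OF m]) (auto simp: Off_def layer_zero units)
  have diag: "layer p H m (\<Sum>r\<in>UNIV. Diag r)"
  proof (intro layer_sum[OF m])
    fix r show "layer p H m (Diag r)"
      by (cases "r = i0")
        (simp_all add: Diag_def layer_zero layer_diagonal_difference[OF m surj _ units])
  qed simp
  have if_sum: "(\<Sum>s\<in>S. if P then f s else 0) = (if P then sum f S else 0)"
    for P S and f :: "'n \<Rightarrow> 'a"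
    by simp
  have off_entry: "(\<Sum>r\<in>UNIV. \<Sum>s\<in>UNIV. Off r s)$a$b = (if a = b then 0 else Y$a$b)" for a b
  proof -
    have "(\<Sum>r\<in>UNIV. \<Sum>s\<in>UNIV. Off r s)$a$b = (\<Sum>r\<in>UNIV. \<Sum>s\<in>UNIV. (Off r s)$a$b)"
      by simp
    also have "\<dots> = (\<Sum>r\<in>UNIV. \<Sum>s\<in>UNIV.
        if r = a then (if s = b then (if a = b then 0 else Y$a$b) else 0) else 0)"
      by (intro sum.cong refl) (auto simp: Off_def)
    also have "\<dots> = (if a = b then 0 else Y$a$b)" by (simp add: if_sum)
    finally show ?thesis .
  qed
  have diag_entry: "(\<Sum>r\<in>UNIV. Diag r)$a$b
      = (if a = b then Y$a$a else 0) - (if a = i0 \<and> b = i0 then trace Y else 0)" for a b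
  proof -
    have "(\<Sum>r\<in>UNIV. Diag r)$a$b = (\<Sum>r\<in>UNIV. (Diag r)$a$b)" by simp
    also have "\<dots> = (\<Sum>r\<in>UNIV. (if r = a then (if a = b then Y$a$a else 0) else 0)
        - Y$r$r * (if a = i0 \<and> b = i0 then 1 else 0))"
      by (intro sum.cong refl) (auto simp: Diag_def algebra_simps)
    also have "\<dots> = (if a = b then Y$a$a else 0) - trace Y * (if a = i0 \<and> b = i0 then 1 else 0)"
      by (simp add: sum_subtractf sum_distrib_right[symmetric] trace_def)
    finally show ?thesis by simp
  qed
  have "cong_mat p ((\<Sum>r\<in>UNIV. \<Sum>s\<in>UNIV. Off r s) + (\<Sum>r\<in>UNIV. Diag r)) Y"
    unfolding cong_mat_def using tr
    by (auto simp del: sum_component simp add: off_entry diag_entry)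
  then show ?thesis using layer_add[OF m off diag] layer_cong by blast
qed

end

section \<open>Successive approximation\<close>

lemma approximation_step:
  fixes p :: "'a::idom" and H :: "('a^'n^'n) set"
  assumes normal: "normal H SL" and p: "p \<noteq> 0" and m: "m \<ge> 1"
    and traceless: "\<And>Y. p dvd trace Y \<Longrightarrow> layer p H m Y"
    and A: "det A = 1" and h: "h \<in> H" "cong_mat (p^m) A h"
  shows "\<exists>h'\<in>H. cong_mat (p^(m+1)) A h'"
proof -
  define hi where "hi = inv\<^bsub>SL\<^esub> h"
  note inverse = H_inverse[OF normal h(1), folded hi_def]
  define B where "B = hi ** A"
  have "cong_mat (p^m) B (hi ** h)" unfolding B_def using h(2) by (rule cong_mat_mult_left)
  then obtain Y where B: "B = mat 1 + mscale (p^m) Y"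
    using inverse(3) by (auto elim: cong_mat_decompose)
  have "det B = 1" unfolding B_def using H_det[OF normal inverse(1)] A by (simp add: det_mul)
  then have "p dvd trace Y" using trace_dvd_of_det_one[OF p m] B by simp
  then have "layer p H m Y" by (rule traceless)
  then obtain h' where h': "h' \<in> H" "cong_mat (p^(m+1)) h' B" unfolding layer_def B by blast
  have "h ** h' \<in> H" using subgroup.m_closed[OF H_subgroup[OF normal] h(1) h'(1)] by simp
  moreover have "h ** B = A" unfolding B_def using inverse(2) by (simp add: matrix_mul_assoc)
  then have "cong_mat (p^(m+1)) A (h ** h')"
    using cong_mat_sym[OF cong_mat_mult_left[OF h'(2), of h]] by simp
  ultimately show ?thesis by blast
qed

lemma SL_approximable:
  fixes p a :: "'a::idom" and H :: "('a^'n^'n) set"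
  assumes normal: "normal H SL" and p: "p \<noteq> 0" and surj: "surj_mod p H"
    and a: "a dvd 1" "(a * a - 1) dvd 1" and A: "det A = 1"
  shows "\<exists>h\<in>H. cong_mat (p^m) A h"
proof (induction m)
  case 0
  have "mat 1 \<in> H" using subgroup.one_closed[OF H_subgroup[OF normal]] by simp
  then show ?case by (auto simp: cong_mat_def)
next
  case (Suc m)
  show ?case
  proof (cases "m = 0")
    case True
    obtain g where "g \<in> H" "cong_mat p g A" using lift_from_surj_mod[OF normal surj A] .
    then show ?thesis using True cong_mat_sym by auto
  next
    case False
    then have m: "m \<ge> 1" by simp
    have "layer p H m Y" if "p dvd trace Y" for Y
      using layer_traceless[OF normal m surj layer_matrix_unit[OF normal m surj _ a] that] .
    moreover obtain h where "h \<in> H" "cong_mat (p^m) A h" using Suc.IH by blast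
    ultimately show ?thesis using approximation_step[OF normal p m _ A] by simp
  qed
qed

theorem mainTheorem15:
  fixes \<pi> :: "'a::idom"
    and H :: "('a ^ 'n ^ 'n) set"
  assumes "dvr_uniformizer \<pi>"
    and "padic_complete \<pi>"
    and "equal_char \<pi>"
    and "finite (residue_field \<pi>)"
    and "card (residue_field \<pi>) > 9"
    and "CARD('n) \<ge> 2"
    and "normal H (SL :: ('a ^ 'n ^ 'n) monoid)"
    and "SL_closed \<pi> H"
    and "surj_mod \<pi> H"
  shows "H = carrier (SL :: ('a ^ 'n ^ 'n) monoid)"
proof
  show "H \<subseteq> carrier SL" using subgroup.subset[OF H_subgroup[OF assms(7)]] .
  have "card (residue_field \<pi>) > 3" using assms(5) by simp
  then obtain a :: 'a where a: "a dvd 1" "(a * a - 1) dvd 1"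
    by (rule exists_unit_square_minus_one_unit[OF assms(1,4)])
  have p: "\<pi> \<noteq> 0" using assms(1) unfolding dvr_uniformizer_def by simp
  show "carrier SL \<subseteq> H"
  proof
    fix A :: "'a^'n^'n" assume "A \<in> carrier SL"
    then have A: "det A = 1" by simp
    then have "\<exists>h\<in>H. cong_mat (\<pi>^m) A h" for m
      using SL_approximable[OF assms(7) p assms(9) a] by blast
    then show "A \<in> H" using assms(8) A unfolding SL_closed_def cong_mat_def by blast
  qed
qed

end
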